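(* Let $(\mathsf P,\mathcal O)$ be a semitopology and $p\in\mathsf P$. Then: (1) $p$ is regular if and only if $p$ is weakly regular and strongly compatible; (2) every point of $\mathsf P$ is regular if and only if every point of $\mathsf P$ is weakly regular and the semiframe $(\mathcal O,\subseteq,\between)$ is strongly compatible.
   Context: A semitopology is a pair $(\mathsf P,\mathcal O)$ where $\mathcal O\subseteq\mathcal P(\mathsf P)$ contains $\varnothing,\mathsf P$ and is closed under arbitrary unions. Write $O\between O'$ when $O\cap O'\neq\varnothing$. $T$ is topen when nonempty, open, and for all open $O,O'$, $O\between T\between O'$ implies $O\between O'$. Points are intertwined when every open containing one meets every open containing the other; $I(p)$ is the set of points intertwined with $p$; $K(p)$ is the union of all open subsets of $I(p)$. $p$ is regular when $p\in K(p)$ and $K(p)$ is topen; weakly regular when $p\in K(p)$. $\mathrm{nbhd}(p)=\{O\in\mathcal O\mid p\in O\}$. For $F\subseteq\mathcal O$, $F^\ast=\{O'\in\mathcal O\mid O'\between O\text{ for all }O\in F\}$; $F$ is strongly compatible when $F^\ast$ is nonempty and its elements pairwise intersect. A point $p$ is strongly compatible when $\mathrm{nbhd}(p)$ is strongly compatible. An abstract point of $(\mathcal O,\subseteq,\between)$ is a nonempty, up-closed (under $\subseteq$ within $\mathcal O$), pairwise-intersecting set $F\subseteq\mathcal O$ that is completely prime: if $\bigcup\mathcal Y\in F$ for $\mathcal Y\subseteq\mathcal O$ (possibly empty) then some element of $\mathcal Y$ is in $F$. The semiframe $(\mathcal O,\subseteq,\between)$ is strongly compatible when every abstract point of it is strongly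 compatible. *)

theory Defs
  imports Main
begin

definition semitopology :: "'a set \<Rightarrow> 'a set set \<Rightarrow> bool" where
  "semitopology P Opens \<longleftrightarrow> Opens \<subseteq> Pow P \<and> {} \<in> Opens \<and> P \<in> Opens \<and>
     (\<forall>X. X \<subseteq> Opens \<longrightarrow> \<Union>X \<in> Opens)"

definition betw :: "'a set \<Rightarrow> 'a set \<Rightarrow> bool" where
  "betw A B \<longleftrightarrow> A \<inter> B \<noteq> {}"

definition topen :: "'a set set \<Rightarrow> 'a set \<Rightarrow> bool" where
  "topen Opens T \<longleftrightarrow> T \<noteq> {} \<and> T \<in> Opens \<and>
     (\<forall>O1\<in>Opens. \<forall>O2\<in>Opens. betw O1 T \<and> betw T O2 \<longrightarrow> betw O1 O2)"

definition intertwined :: "'a set set \<Rightarrow> 'a \<Rightarrow> 'a \<Rightarrow> bool" where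
  "intertwined Opens p q \<longleftrightarrow>
     (\<forall>O1\<in>Opens. \<forall>O2\<in>Opens. p \<in> O1 \<and> q \<in> O2 \<longrightarrow> betw O1 O2)"

definition intertwined_set :: "'a set \<Rightarrow> 'a set set \<Rightarrow> 'a \<Rightarrow> 'a set" where
  "intertwined_set P Opens p = {q \<in> P. intertwined Opens p q}"

definition community :: "'a set \<Rightarrow> 'a set set \<Rightarrow> 'a \<Rightarrow> 'a set" where
  "community P Opens p = \<Union>{O1 \<in> Opens. O1 \<subseteq> intertwined_set P Opens p}"

definition regular_pt :: "'a set \<Rightarrow> 'a set set \<Rightarrow> 'a \<Rightarrow> bool" where
  "regular_pt P Opens p \<longleftrightarrow> p \<in> community P Opens p \<and> topen Opens (community P Opens p)"

definition weakly_regular_pt :: "'a set \<Rightarrow> 'a set set \<Rightarrow> 'a \<Rightarrow> bool" where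
  "weakly_regular_pt P Opens p \<longleftrightarrow> p \<in> community P Opens p"

definition nbhd :: "'a set set \<Rightarrow> 'a \<Rightarrow> 'a set set" where
  "nbhd Opens p = {O1 \<in> Opens. p \<in> O1}"

definition star :: "'a set set \<Rightarrow> 'a set set \<Rightarrow> 'a set set" where
  "star Opens F = {O' \<in> Opens. \<forall>O1\<in>F. betw O' O1}"

definition strongly_compatible_set :: "'a set set \<Rightarrow> 'a set set \<Rightarrow> bool" where
  "strongly_compatible_set Opens F \<longleftrightarrow> star Opens F \<noteq> {} \<and>
     (\<forall>A\<in>star Opens F. \<forall>B\<in>star Opens F. betw A B)"

definition strongly_compatible_pt :: "'a set set \<Rightarrow> 'a \<Rightarrow> bool" where
  "strongly_compatible_pt Opens p \<longleftrightarrow> strongly_compatible_set Opens (nbhd Opens p)"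

definition abstract_point :: "'a set set \<Rightarrow> 'a set set \<Rightarrow> bool" where
  "abstract_point Opens F \<longleftrightarrow> F \<subseteq> Opens \<and> F \<noteq> {} \<and>
     (\<forall>A\<in>F. \<forall>B\<in>Opens. A \<subseteq> B \<longrightarrow> B \<in> F) \<and>
     (\<forall>A\<in>F. \<forall>B\<in>F. betw A B) \<and>
     (\<forall>Y. Y \<subseteq> Opens \<and> \<Union>Y \<in> F \<longrightarrow> (\<exists>A\<in>Y. A \<in> F))"

definition strongly_compatible_semiframe :: "'a set set \<Rightarrow> bool" where
  "strongly_compatible_semiframe Opens \<longleftrightarrow>
     (\<forall>F. abstract_point Opens F \<longrightarrow> strongly_compatible_set Opens F)"

end

theory Submission
  imports Defs
begin

text \<open>
  If \<open>p \<in> K(p)\<close>, then an open set meets every neighbourhood of \<open>p\<close> exactly when it meets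
  \<open>K(p)\<close>: one direction because \<open>K(p)\<close> is itself a neighbourhood of \<open>p\<close>, the other because
  every point of \<open>K(p)\<close> is intertwined with \<open>p\<close>. So \<open>nbhd(p)\<^sup>*\<close> is the set of opens meeting
  \<open>K(p)\<close>, and its elements pairwise intersect iff \<open>K(p)\<close> is topen. For the semiframe, an
  abstract point contains \<open>P\<close>, which is covered by the communities, so by complete primality
  it contains some topen \<open>K(q)\<close>; every element of its star meets \<open>K(q)\<close>.
\<close>

lemma betw_commute: "betw A B \<longleftrightarrow> betw B A"
  unfolding betw_def by blast

lemma community_open:
  assumes "semitopology P Opens"
  shows "community P Opens p \<in> Opens"
  using assms unfolding semitopology_def community_def by auto

lemma community_subset_carrier: "community P Opens p \<subseteq> P"
  unfolding community_def intertwined_set_def by auto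

lemma topen_iff_meeting_opens_betw:
  "topen Opens T \<longleftrightarrow> T \<noteq> {} \<and> T \<in> Opens \<and>
     (\<forall>A\<in>Opens. \<forall>B\<in>Opens. betw A T \<longrightarrow> betw B T \<longrightarrow> betw A B)"
  unfolding topen_def by (metis betw_commute)

lemma star_nbhd_eq_opens_meeting_community:
  assumes "semitopology P Opens" and "weakly_regular_pt P Opens p"
  shows "star Opens (nbhd Opens p) = {A \<in> Opens. betw A (community P Opens p)}"
proof (intro equalityI subsetI)
  fix A assume "A \<in> star Opens (nbhd Opens p)"
  moreover have "community P Opens p \<in> nbhd Opens p"
    using assms(2) community_open[OF assms(1)] unfolding weakly_regular_pt_def nbhd_def by simp
  ultimately show "A \<in> {A \<in> Opens. betw A (community P Opens p)}"
    unfolding star_def by blast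
next
  fix A assume "A \<in> {A \<in> Opens. betw A (community P Opens p)}"
  then obtain q where A: "A \<in> Opens" "q \<in> A" and "q \<in> community P Opens p"
    unfolding betw_def by blast
  then have "intertwined Opens p q"
    unfolding community_def intertwined_set_def by blast
  with A have "betw A U" if "U \<in> nbhd Opens p" for U
    using that betw_commute unfolding intertwined_def nbhd_def by blast
  with A show "A \<in> star Opens (nbhd Opens p)"
    unfolding star_def by blast
qed

lemma carrier_in_star:
  assumes "semitopology P Opens" and "F \<subseteq> Opens" and "{} \<notin> F"
  shows "P \<in> star Opens F"
proof -
  have "P \<in> Opens" "F \<subseteq> Pow P"
    using assms(1,2) unfolding semitopology_def by auto
  then show ?thesis
    using assms(3) unfolding star_def betw_def by (auto simp: Int_absorb1)
qed

lemma strongly_compatible_set_if_topen_member: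
  assumes "semitopology P Opens" and "F \<subseteq> Opens" and "{} \<notin> F"
    and "topen Opens T" and "T \<in> F"
  shows "strongly_compatible_set Opens F"
proof -
  have "betw A B" if "A \<in> star Opens F" "B \<in> star Opens F" for A B
    using that assms(4,5) unfolding star_def topen_iff_meeting_opens_betw by blast
  then show ?thesis
    using carrier_in_star[OF assms(1-3)] unfolding strongly_compatible_set_def by blast
qed

lemma regular_iff_weakly_regular_strongly_compatible:
  assumes "semitopology P Opens"
  shows "regular_pt P Opens p \<longleftrightarrow>
           weakly_regular_pt P Opens p \<and> strongly_compatible_pt Opens p"
proof
  assume reg: "regular_pt P Opens p"
  have "nbhd Opens p \<subseteq> Opens" "{} \<notin> nbhd Opens p" "community P Opens p \<in> nbhd Opens p"
    using reg community_open[OF assms] unfolding regular_pt_def nbhd_def by auto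
  with reg show "weakly_regular_pt P Opens p \<and> strongly_compatible_pt Opens p"
    using strongly_compatible_set_if_topen_member[OF assms]
    unfolding regular_pt_def weakly_regular_pt_def strongly_compatible_pt_def by blast
next
  assume "weakly_regular_pt P Opens p \<and> strongly_compatible_pt Opens p"
  then have wr: "weakly_regular_pt P Opens p"
    and "\<forall>A\<in>star Opens (nbhd Opens p). \<forall>B\<in>star Opens (nbhd Opens p). betw A B"
    unfolding strongly_compatible_pt_def strongly_compatible_set_def by auto
  then have "\<forall>A\<in>Opens. \<forall>B\<in>Opens. betw A (community P Opens p) \<longrightarrow> betw B (community P Opens p)
          \<longrightarrow> betw A B"
    using star_nbhd_eq_opens_meeting_community[OF assms] by simp
  with wr community_open[OF assms] show "regular_pt P Opens p"
    unfolding regular_pt_def weakly_regular_pt_def topen_iff_meeting_opens_betw by blast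
qed

lemma abstract_point_nbhd:
  assumes "semitopology P Opens" and "p \<in> P"
  shows "abstract_point Opens (nbhd Opens p)"
proof -
  have "P \<in> nbhd Opens p"
    using assms unfolding semitopology_def nbhd_def by blast
  then show ?thesis
    unfolding abstract_point_def nbhd_def betw_def by blast
qed

lemma carrier_in_abstract_point:
  assumes "semitopology P Opens" and "abstract_point Opens F"
  shows "P \<in> F"
proof -
  obtain A where "A \<in> F"
    using assms(2) unfolding abstract_point_def by auto
  moreover have "A \<subseteq> P" "P \<in> Opens"
    using assms \<open>A \<in> F\<close> unfolding semitopology_def abstract_point_def by auto
  ultimately show ?thesis
    using assms(2) unfolding abstract_point_def by blast
qed

lemma abstract_point_contains_community:
  assumes st: "semitopology P Opens" and wr: "\<forall>q\<in>P. weakly_regular_pt P Opens q"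
    and F: "abstract_point Opens F"
  shows "\<exists>q\<in>P. community P Opens q \<in> F"
proof -
  have "\<Union>(community P Opens ` P) = P"
    using wr community_subset_carrier unfolding weakly_regular_pt_def by fast
  then have "\<Union>(community P Opens ` P) \<in> F"
    using carrier_in_abstract_point[OF st F] by simp
  moreover have "community P Opens ` P \<subseteq> Opens"
    using community_open[OF st] by blast
  moreover have "\<forall>Y. Y \<subseteq> Opens \<and> \<Union>Y \<in> F \<longrightarrow> (\<exists>A\<in>Y. A \<in> F)"
    using F unfolding abstract_point_def by (elim conjE)
  ultimately show ?thesis
    by auto
qed

lemma strongly_compatible_semiframe_if_all_regular:
  assumes st: "semitopology P Opens" and reg: "\<forall>p\<in>P. regular_pt P Opens p"
  shows "strongly_compatible_semiframe Opens"
  unfolding strongly_compatible_semiframe_def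
proof (intro allI impI)
  fix F assume F: "abstract_point Opens F"
  have "\<forall>p\<in>P. weakly_regular_pt P Opens p"
    using reg unfolding regular_pt_def weakly_regular_pt_def by blast
  then obtain q where "q \<in> P" and qF: "community P Opens q \<in> F"
    using abstract_point_contains_community[OF st _ F] by blast
  then have "topen Opens (community P Opens q)"
    using reg unfolding regular_pt_def by blast
  moreover have "F \<subseteq> Opens" "{} \<notin> F"
    using F unfolding abstract_point_def betw_def by auto
  ultimately show "strongly_compatible_set Opens F"
    using strongly_compatible_set_if_topen_member[OF st _ _ _ qF] by blast
qed

theorem corollary9p51:
  assumes "semitopology P Opens"
  shows "(\<forall>p\<in>P. regular_pt P Opens p \<longleftrightarrow>
            weakly_regular_pt P Opens p \<and> strongly_compatible_pt Opens p)
    \<and> ((\<forall>p\<in>P. regular_pt P Opens p) \<longleftrightarrow>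
         (\<forall>p\<in>P. weakly_regular_pt P Opens p) \<and> strongly_compatible_semiframe Opens)"
proof -
  note pointwise = regular_iff_weakly_regular_strongly_compatible[OF assms]
  have "(\<forall>p\<in>P. regular_pt P Opens p) \<longleftrightarrow>
         (\<forall>p\<in>P. weakly_regular_pt P Opens p) \<and> strongly_compatible_semiframe Opens"
  proof
    assume "\<forall>p\<in>P. regular_pt P Opens p"
    then show "(\<forall>p\<in>P. weakly_regular_pt P Opens p) \<and> strongly_compatible_semiframe Opens"
      using strongly_compatible_semiframe_if_all_regular[OF assms] pointwise by blast
  next
    assume "(\<forall>p\<in>P. weakly_regular_pt P Opens p) \<and> strongly_compatible_semiframe Opens"
    then show "\<forall>p\<in>P. regular_pt P Opens p"
      using abstract_point_nbhd[OF assms] pointwise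
      unfolding strongly_compatible_semiframe_def strongly_compatible_pt_def by blast
  qed
  with pointwise show ?thesis by blast
qed

end
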